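(* Let $p$ be a program of $\lambda^\bullet$, let $R$ be a cost function, and let $\mathfrak{L}$ be a set of locations with $\mathfrak{L}_0 \subseteq \mathfrak{L} \subseteq \mathit{Loc}(p)$. Then the weighted partial MaxSMT instance $I(p,R,\mathfrak{L})$ has a solution, i.e. its hard assertions are satisfiable modulo the theory of the inductive datatype $\mathsf{Types}$, so that $\textsc{Solve}(p,R,\mathfrak{L})$ is always defined ($\textsc{Solve}$ is total).
   Context: Language $\lambda^\bullet$: expressions $e ::= x \mid n \mid b \mid \lambda x.e \mid e\,e \mid \mathtt{if}\ e\ \mathtt{then}\ e\ \mathtt{else}\ e \mid \mathtt{let}\ x = e\ \mathtt{in}\ e \mid \bullet$, with $n\in\mathbb{Z}$, $b\in\mathbb{B}$ and $\bullet$ a special value called hole. A program is an expression with no free variables. Monotypes $\tau ::= \mathsf{bool}\mid\mathsf{int}\mid\alpha\mid\tau\to\tau$, polytypes $\sigma ::= \tau \mid \forall\alpha.\sigma$. Typing is standard Hindley–Milner with let-polymorphism (a let-bound variable gets the type $\forall\vec\alpha.\tau_1$ with $\vec\alpha=\mathit{fv}(\tau_1)\setminus\mathit{fv}(\Gamma)$, and each use instantiates it freshly; conditionals require a $\mathsf{bool}$ guard and equal branch types), plus the rule that $\bullet$ gets a fresh unconstrained type variable. A program $p$ is well typed iff $\emptyset\vdash p:\tau$ for some $\tau$. Locations: a location $\ell$ is a path in the abstract syntax tree of $p$ from its root; it identifies the subexpression $p(\ell)$. $\mathit{Loc}(p)$ is the set of all locations of $p$ and $\mathit{Loc}(\ell)$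 the set of locations of the subexpression at $\ell$ (including $\ell$). $\mathit{mask}(p,L)$ replaces each subexpression at a location in $L$ by $\bullet$. A set $L\subseteq\mathit{Loc}(p)$ is an error source of $p$ if $\mathit{mask}(p,L)$ is well typed. A cost function $R$ assigns to each program $p$ a partial function $R(p):\mathit{Loc}(p)\rightharpoonup\mathbb{N}^+$ whose domain always contains the root location of $p$; $R(p)(L)=\sum_{\ell\in L\cap\mathsf{dom}(R(p))}R(p)(\ell)$. An error source $L$ is a minimum error source w.r.t. $R$ if $R(p)(L)\le R(p)(L')$ for every error source $L'$ of $p$. Let-variable bookkeeping: for $\mathtt{let}\ x=e_1^{\ell_1}\ \mathtt{in}\ e_2$ the definition location of $x$ is $\ell_1$ (the root of $e_1$). $\mathit{Uloc}_p(\ell_1)$ is the set of locations of the occurrences (usages) of this $x$ in $p$; $\mathsf{dom}(\mathit{Uloc}_p)$ is the set of all let-definition locations. For a usage location $\ell'$, $\mathit{dloc}(p,\ell')$ is the definition location of the variable used there. $\mathit{Vloc}(\ell)$ is the set of locations in $\mathit{Loc}(\ell)$ that are usages of let-bound variables. $\rho(\Gamma,e)$ denotes a principal type of $e$ under environment $\Gamma$ (a partial function, undefined if $e$ is not typeable under $\Gamma$), written $\forall\vec\delta.\tau_p$. $\mathfrak{L}_0$ is the set of all locations of $p$ except the definition locations of let-bound variables whose defining expressions are well typed (have a principal type) and the usage locations of such variables. $\mathfrak{L}_p=\mathfrak{L}_0\cup\bigcup_{\ell\in\mathsf{dom}(\mathit{Uloc}_p)}\mathit{Uloc}_p(\ell)$.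 Constraints: $\mathsf{Types}$ is the inductive datatype $t::=\mathsf{int}\mid\mathsf{bool}\mid\mathsf{fun}(t,t)$, interpreted in the theory of inductive datatypes (distinct constructors give distinct terms, constructors are injective, every term is built by a constructor). Type variables range over $\mathsf{Types}$. To each location $\ell$ is associated a propositional variable $T_\ell$, and to each let-definition location $\ell$ a propositional variable $P_\ell$ (principal type correctness variable). A constraint set $\Phi$ is a finite set of formulas built from equations between $\mathsf{Types}$-terms and these propositional variables; $T_\ell\Rightarrow S$ for a set $S$ means $T_\ell\Rightarrow\bigwedge S$. Environments $\Pi,\Gamma$ map variables to schemas $\forall\vec\alpha.(\Phi\Rrightarrow\alpha)$ ("$x$ has type $\alpha$ provided $\Phi$ is solved for $\vec\alpha$"); $x:\alpha$ abbreviates $\forall\emptyset.(\emptyset\Rrightarrow\alpha)$. The relation $\Pi,\Gamma\vdash_{\mathfrak{L}} e:\alpha\mid\Phi$ (with all variables called "new" chosen fresh) is defined by: (Abs) if $\Pi.x:\alpha,\Gamma.x:\alpha\vdash_{\mathfrak{L}}e:\beta\mid\Phi$ then $(\lambda x.e)^\ell:\gamma\mid\{T_\ell\Rightarrow(\{\gamma=\mathsf{fun}(\alpha,\beta)\}\cup\Phi)\}$; (App) if $e_1:\alpha\mid\Phi_1$ and $e_2:\beta\mid\Phi_2$ then $(e_1\,e_2)^\ell:\gamma\mid\{T_\ell\Rightarrow(\{\alpha=\mathsf{fun}(\beta,\gamma)\}\cup\Phi_1\cup\Phi_2)\}$; (Cond) if $e_i^{\ell_i}:\alpha_i\mid\Phi_i$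 ($i=1,2,3$) then $(\mathtt{if}\ e_1\ \mathtt{then}\ e_2\ \mathtt{else}\ e_3)^\ell:\gamma\mid\{T_\ell\Rightarrow(\Phi_1\cup\Phi_2\cup\Phi_3\cup\{T_{\ell_1}\Rightarrow\alpha_1=\mathsf{bool},T_{\ell_2}\Rightarrow\alpha_2=\gamma,T_{\ell_3}\Rightarrow\alpha_3=\gamma\})\}$; (Hole) $\bullet:\alpha\mid\emptyset$; (Bool) $b^\ell:\alpha\mid\{T_\ell\Rightarrow\alpha=\mathsf{bool}\}$; (Int) $n^\ell:\alpha\mid\{T_\ell\Rightarrow\alpha=\mathsf{int}\}$; (Var-Exp) if $\ell\in\mathfrak{L}$ and $x:\forall\vec\alpha.(\Phi\Rrightarrow\alpha)\in\Gamma$ then $x^\ell:\gamma\mid\{T_\ell\Rightarrow(\{\gamma=\alpha[\vec\beta/\vec\alpha]\}\cup\Phi[\vec\beta/\vec\alpha])\}$; (Var-Prin) the same conclusion if $\ell\notin\mathfrak{L}$ and $x:\forall\vec\alpha.(\Phi\Rrightarrow\alpha)\in\Pi$; (Let-Exp) if $\ell_1\in\mathfrak{L}$, $\Pi,\Gamma\vdash_{\mathfrak{L}}e_1:\alpha_1\mid\Phi_1$, $\vec\alpha=\mathit{fv}(\Phi_1)\setminus\mathit{fv}(\Gamma)$, $\tau_{exp}=\forall\vec\alpha.(\Phi_1\Rrightarrow\alpha_1)$ and $\Pi,\Gamma.x:\tau_{exp}\vdash_{\mathfrak{L}}e_2:\alpha_2\mid\Phi_2$, then $(\mathtt{let}\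 x=e_1^{\ell_1}\ \mathtt{in}\ e_2)^\ell:\gamma\mid\{T_\ell\Rightarrow(\{\gamma=\alpha_2\}\cup\Phi_1[\vec\beta/\vec\alpha]\cup\Phi_2)\}$; (Let-Prin) if $\ell_1\notin\mathfrak{L}$, $\rho(\Pi,e_1)=\forall\vec\delta.\tau_p$, $\tau_{prin}=\forall\alpha,\vec\delta.(\{P_{\ell_1}\Rightarrow\alpha=\tau_p\}\Rrightarrow\alpha)$, $\Phi_1,\alpha_1,\vec\alpha,\tau_{exp}$ as in (Let-Exp), and $\Pi.x:\tau_{prin},\Gamma.x:\tau_{exp}\vdash_{\mathfrak{L}}e_2:\alpha_2\mid\Phi_2$, then the same conclusion as (Let-Exp). $\Phi_{p,\mathfrak{L}}$ denotes a set with $\emptyset,\emptyset\vdash_{\mathfrak{L}}p:\alpha\mid\Phi_{p,\mathfrak{L}}$ for some $\alpha$. MaxSMT instance: $\mathit{PDefs}(p)=\{P_\ell\Leftrightarrow(\bigwedge_{\ell'\in\mathit{Loc}(\ell)}T_{\ell'}\wedge\bigwedge_{\ell'\in\mathit{Vloc}(\ell)}P_{\mathit{dloc}(\ell')})\mid\ell\in\mathsf{dom}(\mathit{Uloc}_p)\}$. $I(p,R,\mathfrak{L})$ has hard assertions $\Phi_{p,\mathfrak{L}}\cup\{T_\ell\mid\ell\notin\mathsf{dom}(R(p))\}\cup\mathit{PDefs}(p)$ and soft assertions $T_\ell$ for $\ell\in\mathsf{dom}(R(p))$ with weight $R(p)(\ell)$; a solution is a model (modulo the datatype theory) of the hard assertions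 maximizing the total weight of satisfied soft assertions. $\textsc{Solve}(p,R,\mathfrak{L})$ returns some such solution $M$. *)

theory Defs
  imports Main "HOL-Library.Countable" "HOL-Library.FSet"
begin

section \<open>The language lambda-bullet\<close>

type_synonym var = string
type_synonym loc = "nat list"  \<comment> \<open>a path in the AST, from the root\<close>

datatype exp =
    Var var
  | IntE int
  | BoolE bool
  | Lam var exp
  | App exp exp
  | If exp exp exp
  | Let var exp exp
  | Hole

fun sub :: "exp \<Rightarrow> loc \<Rightarrow> exp option" where
  "sub e [] = Some e"
| "sub (Lam x e) (0 # q) = sub e q"
| "sub (App e1 e2) (0 # q) = sub e1 q"
| "sub (App e1 e2) (Suc 0 # q) = sub e2 q"
| "sub (If e1 e2 e3) (0 # q) = sub e1 q"
| "sub (If e1 e2 e3) (Suc 0 # q) = sub e2 q"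
| "sub (If e1 e2 e3) (Suc (Suc 0) # q) = sub e3 q"
| "sub (Let x e1 e2) (0 # q) = sub e1 q"
| "sub (Let x e1 e2) (Suc 0 # q) = sub e2 q"
| "sub _ _ = None"

definition Loc :: "exp \<Rightarrow> loc set" where
  "Loc p = {l. sub p l \<noteq> None}"

definition Loc_at :: "exp \<Rightarrow> loc \<Rightarrow> loc set" where
  "Loc_at p l = {l @ q | q. l @ q \<in> Loc p}"

fun fvars :: "exp \<Rightarrow> var set" where
  "fvars (Var x) = {x}"
| "fvars (Lam x e) = fvars e - {x}"
| "fvars (App e1 e2) = fvars e1 \<union> fvars e2"
| "fvars (If e1 e2 e3) = fvars e1 \<union> fvars e2 \<union> fvars e3"
| "fvars (Let x e1 e2) = fvars e1 \<union> (fvars e2 - {x})"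
| "fvars _ = {}"

definition program :: "exp \<Rightarrow> bool" where
  "program p \<longleftrightarrow> fvars p = {}"

datatype tterm = TV nat | TInt | TBool | TFun tterm tterm

fun tfv :: "tterm \<Rightarrow> nat set" where
  "tfv (TV v) = {v}"
| "tfv (TFun a b) = tfv a \<union> tfv b"
| "tfv _ = {}"

fun tsubst :: "(nat \<Rightarrow> tterm) \<Rightarrow> tterm \<Rightarrow> tterm" where
  "tsubst S (TV v) = S v"
| "tsubst S (TFun a b) = TFun (tsubst S a) (tsubst S b)"
| "tsubst S TInt = TInt"
| "tsubst S TBool = TBool"

section \<open>Hindley-Milner typing with let-polymorphism\<close>

type_synonym hmscheme = "nat set \<times> tterm"   \<comment> \<open>\<forall>A. tau\<close>
type_synonym hmenv = "var \<Rightarrow> hmscheme option"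

definition fv_hmenv :: "hmenv \<Rightarrow> nat set" where
  "fv_hmenv G = (\<Union>x\<in>dom G. tfv (snd (the (G x))) - fst (the (G x)))"

inductive hm :: "hmenv \<Rightarrow> exp \<Rightarrow> tterm \<Rightarrow> bool" where
  hm_var: "G x = Some (A, t) \<Longrightarrow> (\<forall>v. v \<notin> A \<longrightarrow> S v = TV v) \<Longrightarrow> hm G (Var x) (tsubst S t)"
| hm_int: "hm G (IntE n) TInt"
| hm_bool: "hm G (BoolE b) TBool"
| hm_hole: "hm G Hole t"
| hm_abs: "hm (G(x \<mapsto> ({}, t1))) e t2 \<Longrightarrow> hm G (Lam x e) (TFun t1 t2)"
| hm_app: "hm G e1 (TFun t1 t2) \<Longrightarrow> hm G e2 t1 \<Longrightarrow> hm G (App e1 e2) t2"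
| hm_if: "hm G e1 TBool \<Longrightarrow> hm G e2 t \<Longrightarrow> hm G e3 t \<Longrightarrow> hm G (If e1 e2 e3) t"
| hm_let: "hm G e1 t1 \<Longrightarrow> hm (G(x \<mapsto> (tfv t1 - fv_hmenv G, t1))) e2 t2
           \<Longrightarrow> hm G (Let x e1 e2) t2"

definition well_typed :: "exp \<Rightarrow> bool" where
  "well_typed p \<longleftrightarrow> (\<exists>t. hm Map.empty p t)"

definition principal :: "hmenv \<Rightarrow> exp \<Rightarrow> hmscheme \<Rightarrow> bool" where
  "principal G e s \<longleftrightarrow> hm G e (snd s) \<and> fst s = tfv (snd s) - fv_hmenv G \<and>
     (\<forall>t'. hm G e t' \<longrightarrow> (\<exists>S. (\<forall>v. v \<notin> fst s \<longrightarrow> S v = TV v) \<and> t' = tsubst S (snd s)))"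

text \<open>Pairs (usage location, definition location) of let-bound variables; the binder
  environment maps a variable to Some (definition location) if its innermost binder is a let.\<close>
fun usages :: "(var \<Rightarrow> loc option) \<Rightarrow> loc \<Rightarrow> exp \<Rightarrow> (loc \<times> loc) set" where
  "usages B l (Var x) = (case B x of Some d \<Rightarrow> {(l, d)} | None \<Rightarrow> {})"
| "usages B l (Lam x e) = usages (B(x := None)) (l @ [0]) e"
| "usages B l (App e1 e2) = usages B (l @ [0]) e1 \<union> usages B (l @ [1]) e2"
| "usages B l (If e1 e2 e3) = usages B (l @ [0]) e1 \<union> usages B (l @ [1]) e2 \<union> usages B (l @ [2]) e3"
| "usages B l (Let x e1 e2) = usages B (l @ [0]) e1 \<union> usages (B(x := Some (l @ [0]))) (l @ [1]) e2"
| "usages B l _ = {}"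

definition use_pairs :: "exp \<Rightarrow> (loc \<times> loc) set" where
  "use_pairs p = usages (\<lambda>_. None) [] p"

text \<open>dom(Uloc_p): all let-definition locations.\<close>
definition letdefs :: "exp \<Rightarrow> loc set" where
  "letdefs p = {l @ [0] | l x e1 e2. sub p l = Some (Let x e1 e2)}"

definition Uloc :: "exp \<Rightarrow> loc \<Rightarrow> loc set" where
  "Uloc p l1 = {l'. (l', l1) \<in> use_pairs p}"

definition dloc :: "exp \<Rightarrow> loc \<Rightarrow> loc" where
  "dloc p l' = (THE l1. (l', l1) \<in> use_pairs p)"

definition Vloc :: "exp \<Rightarrow> loc \<Rightarrow> loc set" where
  "Vloc p l = {l' \<in> Loc_at p l. \<exists>l1. (l', l1) \<in> use_pairs p}"

text \<open>Let-definition locations whose defining expression has a principal type, under the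
  environment Pi as it is built during constraint generation (lambda-bound variables get
  distinct type variables, let-bound variables with well-typed definitions get their
  principal type; other let-bound variables do not extend Pi).\<close>
fun wt_lets :: "hmenv \<Rightarrow> loc \<Rightarrow> exp \<Rightarrow> loc set" where
  "wt_lets D l (Lam x e) = wt_lets (D(x \<mapsto> ({}, TV (to_nat l)))) (l @ [0]) e"
| "wt_lets D l (App e1 e2) = wt_lets D (l @ [0]) e1 \<union> wt_lets D (l @ [1]) e2"
| "wt_lets D l (If e1 e2 e3) = wt_lets D (l @ [0]) e1 \<union> wt_lets D (l @ [1]) e2 \<union> wt_lets D (l @ [2]) e3"
| "wt_lets D l (Let x e1 e2) =
     (if \<exists>s. principal D e1 s
      then insert (l @ [0]) (wt_lets D (l @ [0]) e1 \<union> wt_lets (D(x \<mapsto> (SOME s. principal D e1 s))) (l @ [1]) e2)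
      else wt_lets D (l @ [0]) e1 \<union> wt_lets D (l @ [1]) e2)"
| "wt_lets D l _ = {}"

definition L0 :: "exp \<Rightarrow> loc set" where
  "L0 p = (let W = wt_lets Map.empty [] p in Loc p - (W \<union> (\<Union>l1\<in>W. Uloc p l1)))"

definition Lp :: "exp \<Rightarrow> loc set" where
  "Lp p = L0 p \<union> (\<Union>l\<in>letdefs p. Uloc p l)"

datatype Types = Tint | Tbool | Tfun Types Types

datatype fml =
    FEq tterm tterm
  | FT loc
  | FP loc
  | FImp fml fml
  | FIff fml fml
  | FAnd "fml fset"

primrec ffv :: "fml \<Rightarrow> nat set" where
  "ffv (FEq a b) = tfv a \<union> tfv b"
| "ffv (FT l) = {}"
| "ffv (FP l) = {}"
| "ffv (FImp a b) = ffv a \<union> ffv b"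
| "ffv (FIff a b) = ffv a \<union> ffv b"
| "ffv (FAnd S) = \<Union> (fset (ffv |`| S))"

definition fvs :: "fml fset \<Rightarrow> nat set" where
  "fvs S = \<Union> (ffv ` fset S)"

fun tren :: "(nat \<Rightarrow> nat) \<Rightarrow> tterm \<Rightarrow> tterm" where
  "tren f (TV v) = TV (f v)"
| "tren f (TFun a b) = TFun (tren f a) (tren f b)"
| "tren f TInt = TInt"
| "tren f TBool = TBool"

primrec fren :: "(nat \<Rightarrow> nat) \<Rightarrow> fml \<Rightarrow> fml" where
  "fren f (FEq a b) = FEq (tren f a) (tren f b)"
| "fren f (FT l) = FT l"
| "fren f (FP l) = FP l"
| "fren f (FImp a b) = FImp (fren f a) (fren f b)"
| "fren f (FIff a b) = FIff (fren f a) (fren f b)"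
| "fren f (FAnd S) = FAnd (fren f |`| S)"

record model =
  tyv :: "nat \<Rightarrow> Types"
  tv :: "loc \<Rightarrow> bool"
  pv :: "loc \<Rightarrow> bool"

fun teval :: "(nat \<Rightarrow> Types) \<Rightarrow> tterm \<Rightarrow> Types" where
  "teval s (TV v) = s v"
| "teval s TInt = Tint"
| "teval s TBool = Tbool"
| "teval s (TFun a b) = Tfun (teval s a) (teval s b)"

primrec sat :: "model \<Rightarrow> fml \<Rightarrow> bool" where
  "sat M (FEq a b) = (teval (tyv M) a = teval (tyv M) b)"
| "sat M (FT l) = tv M l"
| "sat M (FP l) = pv M l"
| "sat M (FImp a b) = (sat M a \<longrightarrow> sat M b)"
| "sat M (FIff a b) = (sat M a \<longleftrightarrow> sat M b)"
| "sat M (FAnd S) = (\<forall>b \<in> fset (sat M |`| S). b)"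

definition sats :: "model \<Rightarrow> fml set \<Rightarrow> bool" where
  "sats M S \<longleftrightarrow> (\<forall>\<phi>\<in>S. sat M \<phi>)"

text \<open>Constraint schema \<open>\<forall>A.(\<Phi> \<Rrightarrow> a)\<close>.\<close>
type_synonym schema = "nat set \<times> fml fset \<times> nat"

definition schema_fv :: "schema \<Rightarrow> nat set" where
  "schema_fv s = (case s of (A, F, a) \<Rightarrow> (fvs F \<union> {a}) - A)"

text \<open>Entries of Pi: lambda-bound \<open>x:\<alpha>\<close>, or a principal-type schema
  \<open>\<forall>\<alpha>,\<delta>.({P_l \<Rightarrow> \<alpha> = tp} \<Rrightarrow> \<alpha>)\<close>, written PPrin \<alpha> l \<delta> tp.\<close>
datatype pentry = PMono nat | PPrin nat loc "nat set" tterm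

fun schema_of :: "pentry \<Rightarrow> schema" where
  "schema_of (PMono a) = ({}, {||}, a)"
| "schema_of (PPrin a l D t) = (insert a D, {|FImp (FP l) (FEq (TV a) t)|}, a)"

text \<open>Pi read as a Hindley-Milner environment (used for principal types rho(Pi, e)).\<close>
fun hm_of :: "pentry \<Rightarrow> hmscheme" where
  "hm_of (PMono a) = ({}, TV a)"
| "hm_of (PPrin a l D t) = (D, t)"

type_synonym penv = "var \<Rightarrow> pentry option"
type_synonym cenv = "var \<Rightarrow> schema option"

definition hm_env :: "penv \<Rightarrow> hmenv" where
  "hm_env P = map_option hm_of \<circ> P"

definition fv_env :: "penv \<Rightarrow> cenv \<Rightarrow> nat set" where
  "fv_env P G = (\<Union>x\<in>dom P. schema_fv (schema_of (the (P x)))) \<union> (\<Union>x\<in>dom G. schema_fv (the (G x)))"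

definition fv_cenv :: "cenv \<Rightarrow> nat set" where
  "fv_cenv G = (\<Union>x\<in>dom G. schema_fv (the (G x)))"

definition fresh :: "nat set \<Rightarrow> nat set list \<Rightarrow> bool" where
  "fresh E Vs \<longleftrightarrow> (\<forall>i<length Vs. Vs ! i \<inter> E = {}) \<and>
     (\<forall>i<length Vs. \<forall>j<length Vs. i \<noteq> j \<longrightarrow> Vs ! i \<inter> Vs ! j = {})"

definition renaming :: "(nat \<Rightarrow> nat) \<Rightarrow> nat set \<Rightarrow> bool" where
  "renaming f A \<longleftrightarrow> inj_on f A \<and> (\<forall>v. v \<notin> A \<longrightarrow> f v = v)"

text \<open>\<open>gen L \<Pi> \<Gamma> e l \<alpha> \<Phi> V\<close>: \<open>\<Pi>,\<Gamma> \<turnstile>_L e^l : \<alpha> | \<Phi>\<close>, where V is the set of all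
  new variables chosen in the derivation (used to express global freshness).\<close>
inductive gen :: "loc set \<Rightarrow> penv \<Rightarrow> cenv \<Rightarrow> exp \<Rightarrow> loc \<Rightarrow> nat \<Rightarrow> fml fset \<Rightarrow> nat set \<Rightarrow> bool" where
  Abs: "gen L (P(x \<mapsto> PMono a)) (G(x \<mapsto> ({}, {||}, a))) e (l @ [0]) b F V
        \<Longrightarrow> fresh (fv_env P G) [V, {a}, {c}]
        \<Longrightarrow> gen L P G (Lam x e) l c {|FImp (FT l) (FAnd ({|FEq (TV c) (TFun (TV a) (TV b))|} |\<union>| F))|}
              (V \<union> {a, c})"
| App: "gen L P G e1 (l @ [0]) a F1 V1 \<Longrightarrow> gen L P G e2 (l @ [1]) b F2 V2
        \<Longrightarrow> fresh (fv_env P G) [V1, V2, {c}]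
        \<Longrightarrow> gen L P G (App e1 e2) l c {|FImp (FT l) (FAnd ({|FEq (TV a) (TFun (TV b) (TV c))|} |\<union>| F1 |\<union>| F2))|}
              (V1 \<union> V2 \<union> {c})"
| Cond: "gen L P G e1 (l @ [0]) a1 F1 V1 \<Longrightarrow> gen L P G e2 (l @ [1]) a2 F2 V2
        \<Longrightarrow> gen L P G e3 (l @ [2]) a3 F3 V3
        \<Longrightarrow> fresh (fv_env P G) [V1, V2, V3, {c}]
        \<Longrightarrow> gen L P G (If e1 e2 e3) l c
              {|FImp (FT l) (FAnd (F1 |\<union>| F2 |\<union>| F3 |\<union>|
                 {|FImp (FT (l @ [0])) (FEq (TV a1) TBool),
                  FImp (FT (l @ [1])) (FEq (TV a2) (TV c)),
                  FImp (FT (l @ [2])) (FEq (TV a3) (TV c))|}))|}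
              (V1 \<union> V2 \<union> V3 \<union> {c})"
| HoleR: "fresh (fv_env P G) [{a}] \<Longrightarrow> gen L P G Hole l a {||} {a}"
| BoolR: "fresh (fv_env P G) [{a}] \<Longrightarrow> gen L P G (BoolE bv) l a {|FImp (FT l) (FEq (TV a) TBool)|} {a}"
| IntR: "fresh (fv_env P G) [{a}] \<Longrightarrow> gen L P G (IntE n) l a {|FImp (FT l) (FEq (TV a) TInt)|} {a}"
| VarExp: "l \<in> L \<Longrightarrow> G x = Some (A, F, a) \<Longrightarrow> renaming f A
        \<Longrightarrow> fresh (fv_env P G) [f ` A, {c}]
        \<Longrightarrow> gen L P G (Var x) l c {|FImp (FT l) (FAnd ({|FEq (TV c) (TV (f a))|} |\<union>| fren f |`| F))|}
              (f ` A \<union> {c})"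
| VarPrin: "l \<notin> L \<Longrightarrow> P x = Some pe \<Longrightarrow> schema_of pe = (A, F, a) \<Longrightarrow> renaming f A
        \<Longrightarrow> fresh (fv_env P G) [f ` A, {c}]
        \<Longrightarrow> gen L P G (Var x) l c {|FImp (FT l) (FAnd ({|FEq (TV c) (TV (f a))|} |\<union>| fren f |`| F))|}
              (f ` A \<union> {c})"
| LetExp: "l @ [0] \<in> L \<Longrightarrow> gen L P G e1 (l @ [0]) a1 F1 V1
        \<Longrightarrow> A = fvs F1 - fv_cenv G
        \<Longrightarrow> gen L P (G(x \<mapsto> (A, F1, a1))) e2 (l @ [1]) a2 F2 V2
        \<Longrightarrow> renaming f A
        \<Longrightarrow> fresh (fv_env P G) [V1, V2, f ` A, {c}]
        \<Longrightarrow> gen L P G (Let x e1 e2) l c {|FImp (FT l) (FAnd ({|FEq (TV c) (TV a2)|} |\<union>| fren f |`| F1 |\<union>| F2))|}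
              (V1 \<union> V2 \<union> f ` A \<union> {c})"
| LetPrin: "l @ [0] \<notin> L \<Longrightarrow> principal (hm_env P) e1 (D, tp)
        \<Longrightarrow> gen L P G e1 (l @ [0]) a1 F1 V1
        \<Longrightarrow> A = fvs F1 - fv_cenv G
        \<Longrightarrow> d \<notin> tfv tp
        \<Longrightarrow> gen L (P(x \<mapsto> PPrin d (l @ [0]) D tp)) (G(x \<mapsto> (A, F1, a1))) e2 (l @ [1]) a2 F2 V2
        \<Longrightarrow> renaming f A
        \<Longrightarrow> fresh (fv_env P G) [V1, V2, f ` A, {c}, {d}]
        \<Longrightarrow> gen L P G (Let x e1 e2) l c {|FImp (FT l) (FAnd ({|FEq (TV c) (TV a2)|} |\<union>| fren f |`| F1 |\<union>| F2))|}
              (V1 \<union> V2 \<union> f ` A \<union> {c, d})"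

section \<open>Cost functions and the MaxSMT instance\<close>

definition cost_function :: "(exp \<Rightarrow> loc \<Rightarrow> nat option) \<Rightarrow> bool" where
  "cost_function R \<longleftrightarrow> (\<forall>p. program p \<longrightarrow>
     [] \<in> dom (R p) \<and> dom (R p) \<subseteq> Loc p \<and> (\<forall>l n. R p l = Some n \<longrightarrow> 0 < n))"

definition PDefs :: "exp \<Rightarrow> fml set" where
  "PDefs p = {FIff (FP l) (FAnd (Abs_fset ((FT ` Loc_at p l) \<union> ((\<lambda>l'. FP (dloc p l')) ` Vloc p l))))
              | l. l \<in> letdefs p}"

text \<open>Hard assertions of I(p,R,L), given the constraint set \<Phi>_{p,L}.\<close>
definition hard :: "exp \<Rightarrow> (exp \<Rightarrow> loc \<Rightarrow> nat option) \<Rightarrow> fml fset \<Rightarrow> fml set" where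
  "hard p R F = fset F \<union> {FT l | l. l \<in> Loc p \<and> l \<notin> dom (R p)} \<union> PDefs p"

definition weight :: "exp \<Rightarrow> (exp \<Rightarrow> loc \<Rightarrow> nat option) \<Rightarrow> model \<Rightarrow> nat" where
  "weight p R M = (\<Sum>l\<in>{l \<in> dom (R p). tv M l}. the (R p l))"

definition is_solution :: "exp \<Rightarrow> (exp \<Rightarrow> loc \<Rightarrow> nat option) \<Rightarrow> fml fset \<Rightarrow> model \<Rightarrow> bool" where
  "is_solution p R F M \<longleftrightarrow> sats M (hard p R F) \<and>
     (\<forall>M'. sats M' (hard p R F) \<longrightarrow> weight p R M' \<le> weight p R M)"

end

theory Submission
  imports Defs
begin

text \<open>Every constraint of \<open>\<Phi>\<^sub>p\<^sub>,\<^sub>L\<close> is guarded by the variable \<open>T\<close> of the root location, so a model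
  that switches off the root (which is only a soft assertion) satisfies \<open>\<Phi>\<^sub>p\<^sub>,\<^sub>L\<close> whatever the
  type variables are.  Keeping every other \<open>T\<^sub>\<ell>\<close> and every \<open>P\<^sub>\<ell>\<close> true satisfies the remaining hard
  assertions, because let-definition locations lie strictly below the root.  As the hard
  assertions are satisfiable and the total weight is bounded by the finite sum of all
  weights, a model of maximal weight exists.\<close>

fun children :: "exp \<Rightarrow> exp list" where
  "children (Lam x e) = [e]"
| "children (App e1 e2) = [e1, e2]"
| "children (If e1 e2 e3) = [e1, e2, e3]"
| "children (Let x e1 e2) = [e1, e2]"
| "children _ = []"

lemma sub_Cons_child:
  "sub e (i # q) \<noteq> None \<Longrightarrow> i \<in> {0, 1, 2} \<and> (\<exists>c \<in> set (children e). sub c q \<noteq> None)"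
  by (induction e "i # q" rule: sub.induct) auto

lemma Loc_subset_children:
  "Loc e \<subseteq> insert [] (\<Union>i\<in>{0, 1, 2}. \<Union>c\<in>set (children e). (#) i ` Loc c)"
proof
  fix l assume "l \<in> Loc e"
  show "l \<in> insert [] (\<Union>i\<in>{0, 1, 2}. \<Union>c\<in>set (children e). (#) i ` Loc c)"
  proof (cases l)
    case (Cons i q)
    with \<open>l \<in> Loc e\<close> obtain c where "i \<in> {0, 1, 2}" "c \<in> set (children e)" "q \<in> Loc c"
      using sub_Cons_child[of e i q] by (auto simp: Loc_def)
    with Cons show ?thesis by blast
  qed simp
qed

lemma finite_Loc: "finite (Loc e)"
  by (induction e) (rule finite_subset[OF Loc_subset_children]; auto)+

lemma finite_Loc_at: "finite (Loc_at p l)"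
  by (rule finite_subset[OF _ finite_Loc[of p]]) (auto simp: Loc_at_def)

lemma finite_Vloc: "finite (Vloc p l)"
  by (rule finite_subset[OF _ finite_Loc_at[of p l]]) (auto simp: Vloc_def)

lemma gen_guarded:
  "gen L P G e l a F V \<Longrightarrow> F = {||} \<or> (\<exists>\<psi>. F = {|FImp (FT l) \<psi>|})"
  by (induction rule: gen.induct) auto

lemma gen_sat_if_root_off:
  assumes "gen L P G e l a F V" and "\<not> tv M l"
  shows "\<forall>\<phi>\<in>fset F. sat M \<phi>"
  using gen_guarded[OF assms(1)] assms(2) by auto

definition root_off_model :: model where
  "root_off_model = \<lparr>tyv = (\<lambda>_. Tint), tv = (\<lambda>l. l \<noteq> []), pv = (\<lambda>_. True)\<rparr>"

lemma sats_PDefs_root_off_model: "sats root_off_model (PDefs p)"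
  unfolding sats_def
proof
  fix \<phi> assume "\<phi> \<in> PDefs p"
  then obtain l where l: "l \<in> letdefs p"
    and \<phi>: "\<phi> = FIff (FP l) (FAnd (Abs_fset (FT ` Loc_at p l \<union> (\<lambda>l'. FP (dloc p l')) ` Vloc p l)))"
    by (auto simp: PDefs_def)
  from l have "\<forall>l'\<in>Loc_at p l. l' \<noteq> []" by (auto simp: letdefs_def Loc_at_def)
  moreover have "fset (Abs_fset (FT ` Loc_at p l \<union> (\<lambda>l'. FP (dloc p l')) ` Vloc p l)) =
      FT ` Loc_at p l \<union> (\<lambda>l'. FP (dloc p l')) ` Vloc p l"
    by (rule Abs_fset_inverse) (simp add: finite_Loc_at finite_Vloc)
  ultimately show "sat root_off_model \<phi>"
    unfolding \<phi> by (auto simp: root_off_model_def)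
qed

lemma sats_hard_root_off_model:
  assumes "[] \<in> dom (R p)" and "gen L P G p [] a F V"
  shows "sats root_off_model (hard p R F)"
proof -
  have "\<forall>\<phi>\<in>fset F. sat root_off_model \<phi>"
    using assms(2) by (rule gen_sat_if_root_off) (simp add: root_off_model_def)
  moreover have "sat root_off_model (FT l)" if "l \<notin> dom (R p)" for l
    using that assms(1) by (auto simp: root_off_model_def)
  ultimately show ?thesis
    using sats_PDefs_root_off_model[of p] unfolding sats_def hard_def by blast
qed

lemma weight_le_total:
  assumes "finite (dom (R p))"
  shows "weight p R M \<le> (\<Sum>l\<in>dom (R p). the (R p l))"
  unfolding weight_def by (rule sum_mono2[OF assms]) auto

lemma is_solution_exists:
  assumes "sats M (hard p R F)" and "finite (dom (R p))"
  shows "\<exists>M. is_solution p R F M"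
proof -
  have "weight p R M' < (\<Sum>l\<in>dom (R p). the (R p l)) + 1" for M'
    using weight_le_total[of R p M', OF assms(2)] by (simp add: less_Suc_eq_le)
  then show ?thesis
    using ex_has_greatest_nat[of "\<lambda>M. sats M (hard p R F)" M "weight p R"] assms(1)
    unfolding is_solution_def by blast
qed

theorem lemma1:
  fixes p :: exp and R :: "exp \<Rightarrow> loc \<Rightarrow> nat option" and L :: "loc set"
    and \<alpha> :: nat and \<Phi> :: "fml fset" and V :: "nat set"
  assumes "program p"
    and "cost_function R"
    and "L0 p \<subseteq> L" and "L \<subseteq> Loc p"
    and "gen L Map.empty Map.empty p [] \<alpha> \<Phi> V"
  shows "(\<exists>M. sats M (hard p R \<Phi>)) \<and> (\<exists>M. is_solution p R \<Phi> M)"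
proof -
  have root: "[] \<in> dom (R p)" and "dom (R p) \<subseteq> Loc p"
    using assms(1,2) by (auto simp: cost_function_def)
  then have "finite (dom (R p))"
    using finite_Loc finite_subset by blast
  moreover have "sats root_off_model (hard p R \<Phi>)"
    using root assms(5) by (rule sats_hard_root_off_model)
  ultimately show ?thesis
    using is_solution_exists by blast
qed

end
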